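(* Let $\alpha\in[0,\frac12)$ and $\epsilon\in(0,\infty)$. There exists $C_{\alpha,\epsilon}(T)\in(0,\infty)$ such that for all $M\in\mathbb N$, all $x\in H_M$, all $h\in H_M\setminus\{0\}$ and all $0\le s<t\le T$, almost surely, \[\frac{\|\Pi_M(t,s)h\|_{L^2}}{\|(-A)^{-\alpha}h\|_{L^2}}\le\frac{C_{\alpha,\epsilon}(T)}{(t-s)^\alpha}\exp\Bigl(\epsilon\int_s^t\|\nabla X_M^x(r)\|_{L^2}^2dr\Bigr)\Bigl(\sup_{r\in[s,t]}\|X_M^x(r)\|_{L^\infty}+1\Bigr).\]
   Context: $T\in(0,\infty)$ fixed. $L^2=L^2(0,1)$ (real); $\nabla$ is the derivative on $(0,1)$. With $h_k=\sqrt2\sin(k\pi\cdot)$, $A$ is the Dirichlet Laplacian $Ax=-\sum_k(\pi k)^2\langle x,h_k\rangle_{L^2}h_k$ and $(-A)^{-\alpha}x=\sum_k(\pi k)^{-2\alpha}\langle x,h_k\rangle_{L^2}h_k$. $H_M=\mathrm{span}(h_1,\dots,h_M)$, $P_M$ the orthogonal projection onto $H_M$. $B[x_1,x_2]=x_1\nabla x_2+x_2\nabla x_1$, $B_M[x_1,x_2]=P_MB[P_Mx_1,P_Mx_2]$, $B_M(x)=B_M[x,x]$. $Q$ is a positive self-adjoint trace-class operator on $L^2$ with eigenbasis $(e_k)$, eigenvalues $(q_k)$; $W^Q(t)=\sum_k\sqrt{q_k}W^{(k)}(t)e_k$ with independent standard Brownian motions $W^{(k)}$. For $x\in H_M$,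 $X_M^x$ is the unique $H_M$-valued continuous adapted process with $X_M^x(t)=x+\int_0^t[AX_M^x(r)+B_M(X_M^x(r))]dr+P_MW^Q(t)$. For $s\ge0$ and $h\in H_M$, $\eta_M^h(\cdot|s)$ is the (pathwise) solution on $[s,\infty)$ of $\frac{d}{dt}\eta_M^h(t|s)=A\eta_M^h(t|s)+2B_M[X_M^x(t),\eta_M^h(t|s)]$, $\eta_M^h(s|s)=h$, and $\Pi_M(t,s)h=\eta_M^h(t|s)$ (a random linear operator on $H_M$). *)

theory Defs
  imports "HOL-Probability.Probability"
begin

definition L2_fun :: "(real \<Rightarrow> real) \<Rightarrow> bool" where
  "L2_fun f \<longleftrightarrow> f \<in> borel_measurable lborel \<and> set_integrable lborel {0..1} (\<lambda>\<xi>. (f \<xi>)\<^sup>2)"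

definition L2_inner :: "(real \<Rightarrow> real) \<Rightarrow> (real \<Rightarrow> real) \<Rightarrow> real" where
  "L2_inner f g = (LINT \<xi>:{0..1}|lborel. f \<xi> * g \<xi>)"

definition L2_norm :: "(real \<Rightarrow> real) \<Rightarrow> real" where
  "L2_norm f = sqrt (LINT \<xi>:{0..1}|lborel. (f \<xi>)\<^sup>2)"

definition Linf_norm :: "(real \<Rightarrow> real) \<Rightarrow> real" where
  "Linf_norm f = (SUP \<xi>\<in>{0<..<1}. \<bar>f \<xi>\<bar>)"
  \<comment> \<open>used only for continuous functions (elements of H_M), where ess sup = sup\<close>

definition L2_ONB :: "(nat \<Rightarrow> real \<Rightarrow> real) \<Rightarrow> bool" where
  "L2_ONB e \<longleftrightarrow> (\<forall>k. L2_fun (e k))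
     \<and> (\<forall>i j. L2_inner (e i) (e j) = (if i = j then 1 else 0))
     \<and> (\<forall>f. L2_fun f \<and> (\<forall>k. L2_inner f (e k) = 0) \<longrightarrow> (AE \<xi> in lborel. \<xi> \<in> {0..1} \<longrightarrow> f \<xi> = 0))"

definition hb :: "nat \<Rightarrow> real \<Rightarrow> real" where
  "hb k \<xi> = sqrt 2 * sin (real k * pi * \<xi>)"

text \<open>An element of H_M is represented by its coefficients c k, k = 1..M, w.r.t. hb;
  all other coefficients are zero.\<close>
definition in_HM :: "nat \<Rightarrow> (nat \<Rightarrow> real) \<Rightarrow> bool" where
  "in_HM M c \<longleftrightarrow> (\<forall>k. k \<notin> {1..M} \<longrightarrow> c k = 0)"

definition fn :: "nat \<Rightarrow> (nat \<Rightarrow> real) \<Rightarrow> real \<Rightarrow> real" where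
  "fn M c \<xi> = (\<Sum>k=1..M. c k * hb k \<xi>)"

text \<open>Coefficients of (-A)^(-alpha) c.\<close>
definition negA_pow :: "real \<Rightarrow> (nat \<Rightarrow> real) \<Rightarrow> nat \<Rightarrow> real" where
  "negA_pow \<alpha> c k = (pi * real k) powr (-2 * \<alpha>) * c k"

text \<open>Coefficients of B_M[c,d] = P_M (u v' + v u') with u, v the functions of c, d.\<close>
definition BM :: "nat \<Rightarrow> (nat \<Rightarrow> real) \<Rightarrow> (nat \<Rightarrow> real) \<Rightarrow> nat \<Rightarrow> real" where
  "BM M c d j = (if j \<in> {1..M} then
     integral {0..1} (\<lambda>\<xi>. (fn M c \<xi> * deriv (fn M d) \<xi> + fn M d \<xi> * deriv (fn M c) \<xi>) * hb j \<xi>)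
   else 0)"

definition std_BM :: "'a measure \<Rightarrow> (real \<Rightarrow> 'a \<Rightarrow> real) \<Rightarrow> bool" where
  "std_BM P B \<longleftrightarrow>
     (\<forall>t\<ge>0. B t \<in> borel_measurable P)
   \<and> (\<forall>\<omega>\<in>space P. B 0 \<omega> = 0 \<and> continuous_on {0..} (\<lambda>t. B t \<omega>))
   \<and> (\<forall>s t. 0 \<le> s \<and> s < t \<longrightarrow>
        distributed P lborel (\<lambda>\<omega>. B t \<omega> - B s \<omega>) (\<lambda>x. ennreal (normal_density 0 (sqrt (t - s)) x)))
   \<and> (\<forall>n (\<tau>::nat \<Rightarrow> real). 0 \<le> \<tau> 0 \<and> (\<forall>i<n. \<tau> i < \<tau> (Suc i)) \<longrightarrow>
        prob_space.indep_vars P (\<lambda>_. borel) (\<lambda>i \<omega>. B (\<tau> (Suc i)) \<omega> - B (\<tau> i) \<omega>) {..<n})"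

definition indep_BMs :: "'a measure \<Rightarrow> (nat \<Rightarrow> real \<Rightarrow> 'a \<Rightarrow> real) \<Rightarrow> bool" where
  "indep_BMs P W \<longleftrightarrow> prob_space P \<and> (\<forall>k. std_BM P (W k))
     \<and> prob_space.indep_vars P (\<lambda>_. Pi\<^sub>M {0..} (\<lambda>_. borel)) (\<lambda>k \<omega>. \<lambda>t\<in>{0..}. W k t \<omega>) UNIV"

text \<open>Coefficient j of P_M W^Q(t) at \<omega>, W^Q = sum_k sqrt(q k) W k e k.\<close>
definition PMWQ :: "nat \<Rightarrow> (nat \<Rightarrow> real) \<Rightarrow> (nat \<Rightarrow> real \<Rightarrow> real) \<Rightarrow> (nat \<Rightarrow> real \<Rightarrow> 'a \<Rightarrow> real)
                      \<Rightarrow> real \<Rightarrow> 'a \<Rightarrow> nat \<Rightarrow> real" where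
  "PMWQ M q e W t \<omega> j = (if j \<in> {1..M} then
     (\<Sum>k. sqrt (q k) * W k t \<omega> * L2_inner (e k) (hb j)) else 0)"

text \<open>X (real time, sample point, coefficient) is an H_M-valued continuous process solving
  X(t) = x + int_0^t [A X(r) + B_M(X(r))] dr + P_M W^Q(t).\<close>
definition is_XM :: "'a measure \<Rightarrow> nat \<Rightarrow> (nat \<Rightarrow> real) \<Rightarrow> (nat \<Rightarrow> real) \<Rightarrow> (nat \<Rightarrow> real \<Rightarrow> real)
                      \<Rightarrow> (nat \<Rightarrow> real \<Rightarrow> 'a \<Rightarrow> real) \<Rightarrow> (real \<Rightarrow> 'a \<Rightarrow> nat \<Rightarrow> real) \<Rightarrow> bool" where
  "is_XM P M x q e W X \<longleftrightarrow>
     (\<forall>t \<omega>. in_HM M (X t \<omega>))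
   \<and> (\<forall>\<omega>\<in>space P. \<forall>k. continuous_on {0..} (\<lambda>t. X t \<omega> k))
   \<and> (\<forall>t\<ge>0. \<forall>k. (\<lambda>\<omega>. X t \<omega> k) \<in> borel_measurable P)
   \<and> (AE \<omega> in P. \<forall>t\<ge>0. \<forall>k\<in>{1..M}.
        X t \<omega> k = x k + integral {0..t} (\<lambda>r. - (pi * real k)\<^sup>2 * X r \<omega> k + BM M (X r \<omega>) (X r \<omega>) k)
                   + PMWQ M q e W t \<omega> k)"

text \<open>eta is the solution on [s,\<infinity>) of eta' = A eta + 2 B_M[Y(t), eta], eta(s) = h, for a given path Y.\<close>
definition is_eta :: "nat \<Rightarrow> (real \<Rightarrow> nat \<Rightarrow> real) \<Rightarrow> real \<Rightarrow> (nat \<Rightarrow> real) \<Rightarrow> (real \<Rightarrow> nat \<Rightarrow> real) \<Rightarrow> bool" where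
  "is_eta M Y s h \<eta> \<longleftrightarrow>
     \<eta> s = h \<and> (\<forall>t. in_HM M (\<eta> t))
   \<and> (\<forall>t\<ge>s. \<forall>k\<in>{1..M}.
        ((\<lambda>\<tau>. \<eta> \<tau> k) has_real_derivative
           (- (pi * real k)\<^sup>2 * \<eta> t k + 2 * BM M (Y t) (\<eta> t) k)) (at t within {s..}))"

end

(* The estimate is pathwise: of the process X only the continuity of its paths is used.
   Write G_p(c) = sum_k (k pi)^p c_k^2, theta = 2 alpha, and let S bound |X| on [s,t].
   Integration by parts turns the pairing of the nonlinear term B_M[X, eta] with w into
   -int X eta w', and Young's inequality then gives
     d/dt G_(-2 theta)(eta) <= -G_(2 - 2 theta)(eta) + 16 S^2 G_(-2 theta)(eta).
   On an interval of length tau <= S^-2 this, together with the interpolation inequality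
   G_0 <= tau^(-theta) G_(-2 theta) + tau^(1 - theta) G_(2 - 2 theta), yields the smoothing bound
   G_0(eta(s + tau)) <= K tau^(-theta) G_(-2 theta)(h).  Beyond time S^-2 the L2 energy obeys
   d/dt G_0 <= (2 eps |grad X|^2 + 1/(8 eps^2)) G_0, by the bound |d|_oo^2 <= mu G_0 + G_2 / mu,
   and Gronwall's inequality produces the exponential factor. *)

theory Submission
  imports Defs
begin

lemma two_mult_le_weighted_sq:
  fixes a b \<mu> :: real
  assumes "\<mu> > 0"
  shows "2 * (a * b) \<le> \<mu> * a^2 + b^2 / \<mu>"
proof -
  have "0 \<le> (\<mu> * a - b)^2 / \<mu>"
    using assms by simp
  also have "\<dots> = \<mu> * a^2 + b^2 / \<mu> - 2 * (a * b)"
    using assms by (simp add: power2_eq_square field_simps)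
  finally show ?thesis
    by simp
qed

lemma one_le_powr_neg_add_powr:
  fixes x \<theta> :: real
  assumes "x > 0" "0 \<le> \<theta>" "\<theta> \<le> 1"
  shows "1 \<le> x powr (-\<theta>) + x powr (1 - \<theta>)"
proof (cases "x \<ge> 1")
  case True
  then have "1 \<le> x powr (1 - \<theta>)"
    using assms by (intro ge_one_powr_ge_zero) auto
  then show ?thesis
    by (rule add_increasing[OF powr_ge_zero])
next
  case False
  then have "1 \<le> x powr (-\<theta>)"
    using assms by (simp add: powr_minus one_le_inverse_iff powr_le1)
  then show ?thesis
    by (rule add_increasing2[OF powr_ge_zero])
qed

lemma young_weight_le:
  fixes u a \<theta> :: real
  assumes "u > 0" "a > 0" "0 \<le> \<theta>" "\<theta> \<le> 1"
  shows "u powr (2 - 2*\<theta>) + u powr (2*\<theta>) * a powr (2 - 4*\<theta>)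
         \<le> 2 * (a powr (2 - 2*\<theta>) + u^2 * a powr (-2*\<theta>))"
proof (cases "u \<le> a")
  case True
  have "u powr (2 - 2*\<theta>) \<le> a powr (2 - 2*\<theta>)"
    using True assms by (intro powr_mono2) auto
  moreover have "u powr (2*\<theta>) * a powr (2 - 4*\<theta>) \<le> a powr (2*\<theta>) * a powr (2 - 4*\<theta>)"
    using True assms by (intro mult_right_mono powr_mono2) auto
  moreover have "a powr (2*\<theta>) * a powr (2 - 4*\<theta>) = a powr (2 - 2*\<theta>)"
    by (simp add: powr_add[symmetric])
  moreover have "0 \<le> u^2 * a powr (-2*\<theta>)" "0 \<le> a powr (2 - 2*\<theta>)"
    by simp_all
  ultimately show ?thesis
    by (smt (verit))
next
  case False
  have u2: "u^2 = u powr 2"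
    using assms(1) by (simp add: powr_numeral)
  have "u powr (2 - 2*\<theta>) = u^2 * u powr (-2*\<theta>)"
    unfolding u2 by (simp add: powr_add[symmetric])
  also have "\<dots> \<le> u^2 * a powr (-2*\<theta>)"
    using False assms by (intro mult_left_mono powr_mono2') auto
  finally have pure: "u powr (2 - 2*\<theta>) \<le> u^2 * a powr (-2*\<theta>)" .
  have "u powr (2*\<theta>) * a powr (2 - 4*\<theta>) = u powr (2*\<theta>) * a powr (2 - 2*\<theta>) * a powr (-2*\<theta>)"
    by (simp add: powr_add[symmetric] mult.assoc)
  also have "\<dots> \<le> u powr (2*\<theta>) * u powr (2 - 2*\<theta>) * a powr (-2*\<theta>)"
    using False assms by (intro mult_right_mono mult_left_mono powr_mono2) auto
  also have "\<dots> = u^2 * a powr (-2*\<theta>)"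
    unfolding u2 by (simp add: powr_add[symmetric])
  finally have mixed: "u powr (2*\<theta>) * a powr (2 - 4*\<theta>) \<le> u^2 * a powr (-2*\<theta>)" .
  have "0 \<le> a powr (2 - 2*\<theta>)"
    by simp
  with pure mixed show ?thesis
    by (smt (verit))
qed

lemma sqrt_divide_sqrt_le:
  fixes m G R :: real
  assumes "0 \<le> m" "0 < G" "0 \<le> R" "m \<le> R^2 * G"
  shows "sqrt m / sqrt G \<le> R"
proof -
  have "sqrt m \<le> R * sqrt G"
    using real_sqrt_le_mono[OF assms(4)] assms(3) by (simp add: real_sqrt_mult)
  then show ?thesis
    using assms(2) by (simp add: divide_le_eq)
qed

lemma sqrt_powr_neg_add_sq_le:
  fixes \<tau> T \<alpha> S :: real
  assumes "0 < \<tau>" "\<tau> \<le> T" "0 \<le> \<alpha>" "S \<ge> 1"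
  shows "sqrt (\<tau> powr (-2*\<alpha>) + S^2) \<le> (1 + T powr \<alpha>) / \<tau> powr \<alpha> * S"
proof -
  have "\<tau> powr (-2*\<alpha>) = (1 / \<tau> powr \<alpha>)^2"
    using assms(1) by (simp add: power2_eq_square powr_minus_divide powr_add[symmetric])
  then have "sqrt (\<tau> powr (-2*\<alpha>) + S^2) \<le> 1 / \<tau> powr \<alpha> + S"
    using sqrt_add_le_add_sqrt[of "\<tau> powr (-2*\<alpha>)" "S^2"] assms(4) by simp
  also have "\<dots> \<le> S / \<tau> powr \<alpha> + T powr \<alpha> / \<tau> powr \<alpha> * S"
  proof (intro add_mono)
    show "1 / \<tau> powr \<alpha> \<le> S / \<tau> powr \<alpha>"
      using assms(4) by (simp add: divide_right_mono)
    have "\<tau> powr \<alpha> \<le> T powr \<alpha>"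
      using assms by (intro powr_mono2) auto
    then show "S \<le> T powr \<alpha> / \<tau> powr \<alpha> * S"
      using assms(1,4) by (simp add: le_divide_eq)
  qed
  also have "\<dots> = (1 + T powr \<alpha>) / \<tau> powr \<alpha> * S"
    by (simp add: add_divide_distrib algebra_simps)
  finally show ?thesis .
qed

lemma has_integral_derivative_vanishing_at_ends:
  fixes g :: "real \<Rightarrow> real"
  assumes "\<And>x. x \<in> {0..1} \<Longrightarrow> (g has_real_derivative g' x) (at x within {0..1})"
    and "g 0 = 0" "g 1 = 0"
  shows "(g' has_integral 0) {0..1}"
  using fundamental_theorem_of_calculus[of 0 1 g g'] assms
  by (simp add: has_real_derivative_iff_has_vector_derivative)

lemma gronwall_differential:
  fixes \<phi> \<phi>' a :: "real \<Rightarrow> real"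
  assumes "r \<le> t"
    and \<phi>': "\<And>u. u \<in> {r..t} \<Longrightarrow> (\<phi> has_real_derivative \<phi>' u) (at u within {r..t})"
    and rate: "\<And>u. u \<in> {r..t} \<Longrightarrow> \<phi>' u \<le> a u * \<phi> u"
    and "continuous_on {r..t} a"
  shows "\<phi> t \<le> \<phi> r * exp (integral {r..t} a)"
proof -
  define I where "I u = integral {r..u} a" for u
  have I': "(I has_real_derivative a u) (at u within {r..t})" if "u \<in> {r..t}" for u
    unfolding I_def has_real_derivative_iff_has_vector_derivative
    by (rule integral_has_vector_derivative[OF assms(4) that])
  have "((\<lambda>u. \<phi>' u * exp (- I u) - \<phi> u * (a u * exp (- I u))) has_integral
         \<phi> t * exp (- I t) - \<phi> r * exp (- I r)) {r..t}"
  proof (rule fundamental_theorem_of_calculus[OF assms(1)])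
    fix u
    assume u: "u \<in> {r..t}"
    show "((\<lambda>u. \<phi> u * exp (- I u)) has_vector_derivative \<phi>' u * exp (- I u) - \<phi> u * (a u * exp (- I u)))
          (at u within {r..t})"
      unfolding has_real_derivative_iff_has_vector_derivative[symmetric]
      by (rule derivative_eq_intros \<phi>'[OF u] I'[OF u] refl | simp)+
  qed
  then have "\<phi> t * exp (- I t) - \<phi> r * exp (- I r) \<le> 0"
    by (rule has_integral_le[OF _ has_integral_0]) (use rate in \<open>simp add: algebra_simps\<close>)
  then have "\<phi> t * exp (- I t) * exp (I t) \<le> \<phi> r * exp (I t)"
    by (simp add: I_def mult_right_mono)
  then show ?thesis
    by (simp add: I_def exp_minus field_simps)
qed

lemma gronwall_const_rate:
  fixes \<phi> \<phi>' :: "real \<Rightarrow> real"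
  assumes "a \<le> b"
    and "\<And>u. u \<in> {a..b} \<Longrightarrow> (\<phi> has_real_derivative \<phi>' u) (at u within {a..b})"
    and "\<And>u. u \<in> {a..b} \<Longrightarrow> \<phi>' u \<le> c * \<phi> u"
  shows "\<phi> b \<le> \<phi> a * exp (c * (b - a))"
  using gronwall_differential[of a b \<phi> \<phi>' "\<lambda>_. c"] assms by (simp add: mult.commute)

lemma integral_dissipation_le:
  fixes G G' D :: "real \<Rightarrow> real"
  assumes "a \<le> b"
    and "\<And>u. u \<in> {a..b} \<Longrightarrow> (G has_real_derivative G' u) (at u within {a..b})"
    and "\<And>u. u \<in> {a..b} \<Longrightarrow> G' u \<le> - D u + c * G u"
    and "(D has_integral ID) {a..b}" "(G has_integral IG) {a..b}" "G b \<ge> 0"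
  shows "ID \<le> G a + c * IG"
proof -
  have "(G' has_integral G b - G a) {a..b}"
    using assms(1,2)
    by (intro fundamental_theorem_of_calculus) (simp_all add: has_real_derivative_iff_has_vector_derivative[symmetric])
  then have "G b - G a \<le> - ID + c * IG"
    by (rule has_integral_le[OF _ has_integral_add[OF has_integral_neg has_integral_mult_right]])
       (use assms(3-5) in auto)
  then show ?thesis
    using assms(6) by linarith
qed

section \<open>The sine basis and the Galerkin space\<close>

lemma has_integral_cos_int_pi:
  assumes "m \<in> \<int>"
  shows "((\<lambda>x. cos (m * pi * x)) has_integral (if m = 0 then 1 else 0)) {0..1::real}"
proof (cases "m = 0")
  case False
  have "((\<lambda>x. cos (m * pi * x)) has_integral sin (m * pi * 1) / (m * pi) - sin (m * pi * 0) / (m * pi))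
        {0..1}"
  proof (rule fundamental_theorem_of_calculus)
    fix x :: real
    show "((\<lambda>x. sin (m * pi * x) / (m * pi)) has_vector_derivative cos (m * pi * x)) (at x within {0..1})"
      unfolding has_real_derivative_iff_has_vector_derivative[symmetric]
      by (rule derivative_eq_intros refl | use False in simp)+
  qed simp
  then show ?thesis
    using False assms sin_times_pi_eq_0[of m] by simp
qed (use has_integral_const_real[of 1 0 1] in simp)

lemma hb_orthonormal:
  assumes "j \<ge> 1" "k \<ge> 1"
  shows "((\<lambda>x. hb j x * hb k x) has_integral (if j = k then 1 else 0)) {0..1}"
proof -
  have "hb j x * hb k x = 2 * (sin (real j * pi * x) * sin (real k * pi * x))" for x
    by (simp add: hb_def)
  also have "\<dots> x = cos ((real j - real k) * pi * x) - cos ((real j + real k) * pi * x)" for x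
    unfolding sin_times_sin by (simp add: left_diff_distrib distrib_right)
  finally have "hb j x * hb k x = \<dots> x" for x .
  moreover have "(real j - real k = 0) = (j = k)" "real j + real k \<noteq> 0"
    using assms by auto
  ultimately show ?thesis
    using has_integral_diff[OF has_integral_cos_int_pi has_integral_cos_int_pi, of "real j - real k" "real j + real k"]
    by simp
qed

definition hcos :: "nat \<Rightarrow> real \<Rightarrow> real" where
  "hcos k \<xi> = sqrt 2 * cos (real k * pi * \<xi>)"

lemma hcos_orthonormal:
  assumes "j \<ge> 1" "k \<ge> 1"
  shows "((\<lambda>x. hcos j x * hcos k x) has_integral (if j = k then 1 else 0)) {0..1}"
proof -
  have "hcos j x * hcos k x = 2 * (cos (real j * pi * x) * cos (real k * pi * x))" for x
    by (simp add: hcos_def)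
  also have "\<dots> x = cos ((real j - real k) * pi * x) + cos ((real j + real k) * pi * x)" for x
    unfolding cos_times_cos by (simp add: left_diff_distrib distrib_right)
  finally have "hcos j x * hcos k x = \<dots> x" for x .
  moreover have "(real j - real k = 0) = (j = k)" "real j + real k \<noteq> 0"
    using assms by auto
  ultimately show ?thesis
    using has_integral_add[OF has_integral_cos_int_pi has_integral_cos_int_pi, of "real j - real k" "real j + real k"]
    by simp
qed

lemma has_integral_orthonormal_expansion_mult:
  fixes \<phi> :: "nat \<Rightarrow> real \<Rightarrow> real" and a b :: "nat \<Rightarrow> real"
  assumes "\<And>j k. j \<in> {1..M} \<Longrightarrow> k \<in> {1..M} \<Longrightarrow>
     ((\<lambda>x. \<phi> j x * \<phi> k x) has_integral (if j = k then 1 else 0)) {0..1::real}"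
  shows "((\<lambda>x. (\<Sum>k=1..M. a k * \<phi> k x) * (\<Sum>k=1..M. b k * \<phi> k x)) has_integral
           (\<Sum>k=1..M. a k * b k)) {0..1}"
proof -
  have "(\<Sum>k=1..M. a k * \<phi> k x) * (\<Sum>k=1..M. b k * \<phi> k x)
      = (\<Sum>j=1..M. \<Sum>k=1..M. a j * b k * (\<phi> j x * \<phi> k x))" for x
    by (subst sum_product) (simp add: mult_ac)
  moreover have "((\<lambda>x. \<Sum>j=1..M. \<Sum>k=1..M. a j * b k * (\<phi> j x * \<phi> k x)) has_integral
        (\<Sum>j=1..M. \<Sum>k=1..M. a j * b k * (if j = k then 1 else 0))) {0..1}"
    by (intro has_integral_sum finite_atLeastAtMost has_integral_mult_right assms) auto
  ultimately show ?thesis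
    by (simp add: if_distrib cong: if_cong)
qed

definition dfn :: "nat \<Rightarrow> (nat \<Rightarrow> real) \<Rightarrow> real \<Rightarrow> real" where
  "dfn M c \<xi> = (\<Sum>k=1..M. (c k * (real k * pi)) * hcos k \<xi>)"

lemma fn_has_real_derivative: "(fn M c has_real_derivative dfn M c x) (at x within S)"
proof -
  have "((\<lambda>x. \<Sum>k=1..M. c k * hb k x) has_real_derivative (\<Sum>k=1..M. (c k * (real k * pi)) * hcos k x))
        (at x within S)"
    unfolding hb_def hcos_def by (auto intro!: DERIV_sum derivative_eq_intros simp: algebra_simps)
  then show ?thesis
    unfolding fn_def[abs_def] dfn_def .
qed

lemma deriv_fn: "deriv (fn M c) = dfn M c"
  using fn_has_real_derivative DERIV_imp_deriv by blast

lemma continuous_on_fn: "continuous_on S (fn M c)"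
  unfolding fn_def[abs_def] hb_def by (intro continuous_intros)

lemma continuous_on_dfn: "continuous_on S (dfn M c)"
  unfolding dfn_def[abs_def] hcos_def by (intro continuous_intros)

lemma fn_at_0: "fn M c 0 = 0"
  unfolding fn_def hb_def by simp

lemma fn_at_1: "fn M c 1 = 0"
  unfolding fn_def hb_def by (simp add: sin_npi)

lemma has_integral_fn_mult: "((\<lambda>x. fn M c x * fn M d x) has_integral (\<Sum>k=1..M. c k * d k)) {0..1}"
  unfolding fn_def by (rule has_integral_orthonormal_expansion_mult, rule hb_orthonormal) auto

lemma has_integral_dfn_mult:
  "((\<lambda>x. dfn M c x * dfn M d x) has_integral (\<Sum>k=1..M. (real k * pi)^2 * c k * d k)) {0..1}"
proof -
  have "((\<lambda>x. dfn M c x * dfn M d x) has_integral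
        (\<Sum>k=1..M. (c k * (real k * pi)) * (d k * (real k * pi)))) {0..1}"
    unfolding dfn_def by (rule has_integral_orthonormal_expansion_mult, rule hcos_orthonormal) auto
  then show ?thesis
    by (simp add: power2_eq_square mult_ac)
qed

(* sob_sq M p c is the squared L2 norm of (-A)^(p/4) c, since -A h_k = (k pi)^2 h_k. *)
definition sob_sq :: "nat \<Rightarrow> real \<Rightarrow> (nat \<Rightarrow> real) \<Rightarrow> real" where
  "sob_sq M p c = (\<Sum>k=1..M. (real k * pi) powr p * (c k)^2)"

lemma sob_sq_nonneg: "0 \<le> sob_sq M p c"
  unfolding sob_sq_def by (intro sum_nonneg) auto

lemma sob_sq_0: "sob_sq M 0 c = (\<Sum>k=1..M. (c k)^2)"
  unfolding sob_sq_def by (intro sum.cong) auto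

lemma sob_sq_2: "sob_sq M 2 c = (\<Sum>k=1..M. (real k * pi)^2 * (c k)^2)"
  unfolding sob_sq_def by (intro sum.cong refl) (simp add: powr_numeral)

lemma sob_sq_pos:
  assumes "in_HM M h" "h \<noteq> (\<lambda>_. 0)"
  shows "0 < sob_sq M p h"
proof -
  obtain k where "h k \<noteq> 0"
    using assms(2) by auto
  moreover from this have k: "k \<in> {1..M}"
    using assms(1) unfolding in_HM_def by auto
  ultimately have "0 < (real k * pi) powr p * (h k)^2"
    by auto
  also have "\<dots> \<le> sob_sq M p h"
    unfolding sob_sq_def by (rule member_le_sum[OF _ _ finite_atLeastAtMost, OF k]) auto
  finally show ?thesis .
qed

lemma sob_sq_rescale:
  "sob_sq M p (\<lambda>k. (real k * pi) powr q * d k) = sob_sq M (p + 2 * q) d"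
  unfolding sob_sq_def
proof (intro sum.cong refl)
  fix k
  have "(real k * pi) powr (p + 2 * q) = (real k * pi) powr p * ((real k * pi) powr q)^2"
    by (simp only: mult_2 powr_add power2_eq_square mult.assoc)
  then show "(real k * pi) powr p * ((real k * pi) powr q * d k)^2 = (real k * pi) powr (p + 2 * q) * (d k)^2"
    by (simp add: power_mult_distrib)
qed

lemma sob_sq_0_le_interpolation:
  assumes "\<tau> > 0" "0 \<le> \<theta>" "\<theta> \<le> 1"
  shows "sob_sq M 0 c \<le> \<tau> powr (-\<theta>) * sob_sq M (-2*\<theta>) c + \<tau> powr (1 - \<theta>) * sob_sq M (2 - 2*\<theta>) c"
proof -
  have "sob_sq M 0 c \<le> (\<Sum>k=1..M. (\<tau> powr (-\<theta>) * (real k * pi) powr (-2*\<theta>)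
                                 + \<tau> powr (1 - \<theta>) * (real k * pi) powr (2 - 2*\<theta>)) * (c k)^2)"
    unfolding sob_sq_def
  proof (intro sum_mono)
    fix k
    assume "k \<in> {1..M}"
    define l where "l = real k * pi"
    then have l: "l > 0"
      using \<open>k \<in> {1..M}\<close> by auto
    have scale: "(\<tau> * l^2) powr r = \<tau> powr r * l powr (2 * r)" for r
      using assms(1) l by (simp add: powr_mult powr_powr[symmetric] powr_numeral)
    have "1 \<le> \<tau> powr (-\<theta>) * l powr (-2*\<theta>) + \<tau> powr (1 - \<theta>) * l powr (2 - 2*\<theta>)"
      using one_le_powr_neg_add_powr[of "\<tau> * l^2" \<theta>] assms l unfolding scale
      by (simp add: algebra_simps)
    then show "l powr 0 * (c k)^2 \<le>
        (\<tau> powr (-\<theta>) * l powr (-2*\<theta>) + \<tau> powr (1 - \<theta>) * l powr (2 - 2*\<theta>)) * (c k)^2"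
      using l mult_right_mono[of 1 _ "(c k)^2"] by simp
  qed
  also have "\<dots> = \<tau> powr (-\<theta>) * sob_sq M (-2*\<theta>) c + \<tau> powr (1 - \<theta>) * sob_sq M (2 - 2*\<theta>) c"
    by (simp add: sob_sq_def sum_distrib_left sum.distrib algebra_simps)
  finally show ?thesis .
qed

lemma has_integral_fn_sq: "((\<lambda>x. (fn M c x)^2) has_integral sob_sq M 0 c) {0..1}"
  using has_integral_fn_mult[of M c c] unfolding sob_sq_0 by (simp add: power2_eq_square)

lemma has_integral_dfn_sq: "((\<lambda>x. (dfn M c x)^2) has_integral sob_sq M 2 c) {0..1}"
  using has_integral_dfn_mult[of M c c] unfolding sob_sq_2 by (simp add: power2_eq_square mult_ac)

lemma L2_norm_continuous:
  assumes "continuous_on {0..1} f"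
  shows "L2_norm f = sqrt (integral {0..1} (\<lambda>x. (f x)^2))"
proof -
  have "set_integrable lborel {0..1} (\<lambda>x. (f x)^2)"
    using assms by (intro borel_integrable_atLeastAtMost' continuous_intros)
  then show ?thesis
    unfolding L2_norm_def by (simp add: set_borel_integral_eq_integral(2))
qed

lemma L2_norm_fn: "L2_norm (fn M c) = sqrt (sob_sq M 0 c)"
  using L2_norm_continuous[OF continuous_on_fn] has_integral_fn_sq by (simp add: integral_unique)

lemma L2_norm_deriv_fn_sq: "(L2_norm (deriv (fn M c)))^2 = sob_sq M 2 c"
proof -
  have "integral {0..1} (\<lambda>x. (dfn M c x)^2) = sob_sq M 2 c"
    using has_integral_dfn_sq by (rule integral_unique)
  then show ?thesis
    using sob_sq_nonneg[of M 2 c] by (simp only: deriv_fn L2_norm_continuous[OF continuous_on_dfn] real_sqrt_pow2)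
qed

lemma L2_norm_fn_negA_pow: "L2_norm (fn M (negA_pow \<alpha> h)) = sqrt (sob_sq M (-4 * \<alpha>) h)"
proof -
  have "negA_pow \<alpha> h = (\<lambda>k. (real k * pi) powr (-2 * \<alpha>) * h k)"
    by (simp add: negA_pow_def fun_eq_iff mult.commute)
  then show ?thesis
    using sob_sq_rescale[of M 0 "-2 * \<alpha>" h] by (simp add: L2_norm_fn)
qed

lemma abs_fn_le: "\<bar>fn M c \<xi>\<bar> \<le> (\<Sum>k=1..M. \<bar>c k\<bar> * sqrt 2)"
proof -
  have "\<bar>fn M c \<xi>\<bar> \<le> (\<Sum>k=1..M. \<bar>c k * hb k \<xi>\<bar>)"
    unfolding fn_def by (rule sum_abs)
  also have "\<dots> \<le> (\<Sum>k=1..M. \<bar>c k\<bar> * sqrt 2)"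
    by (intro sum_mono) (simp add: hb_def abs_mult mult_left_mono)
  finally show ?thesis .
qed

lemma abs_fn_le_Linf_norm:
  assumes "\<xi> \<in> {0..1}"
  shows "\<bar>fn M c \<xi>\<bar> \<le> Linf_norm (fn M c)"
proof -
  have bdd: "bdd_above ((\<lambda>\<xi>. \<bar>fn M c \<xi>\<bar>) ` {0<..<1})"
    by (rule bdd_aboveI2, rule abs_fn_le)
  have interior: "\<bar>fn M c x\<bar> \<le> Linf_norm (fn M c)" if "x \<in> {0<..<1}" for x
    unfolding Linf_norm_def by (rule cSUP_upper[OF that bdd])
  show ?thesis
  proof (cases "\<xi> \<in> {0<..<1}")
    case False
    then have "fn M c \<xi> = 0"
      using assms fn_at_0 fn_at_1 by (cases "\<xi> = 0") auto
    then show ?thesis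
      using interior[of "1/2"] by simp
  qed (rule interior)
qed

lemma abs_fn_le_SUP_Linf_norm:
  fixes Y :: "real \<Rightarrow> nat \<Rightarrow> real"
  assumes "\<And>k. continuous_on {s..t} (\<lambda>r. Y r k)" and "u \<in> {s..t}" "\<xi> \<in> {0..1}"
  shows "\<bar>fn M (Y u) \<xi>\<bar> \<le> (SUP r\<in>{s..t}. Linf_norm (fn M (Y r)))"
proof -
  define B where "B r = (\<Sum>k=1..M. \<bar>Y r k\<bar> * sqrt 2)" for r
  have "continuous_on {s..t} B"
    unfolding B_def by (intro continuous_intros assms(1))
  then have "bdd_above (B ` {s..t})"
    by (intro bounded_imp_bdd_above compact_imp_bounded compact_continuous_image compact_Icc)
  then obtain K where K: "\<And>r. r \<in> {s..t} \<Longrightarrow> B r \<le> K"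
    unfolding bdd_above_def by fastforce
  have "Linf_norm (fn M (Y r)) \<le> B r" for r
    unfolding Linf_norm_def B_def by (rule cSUP_least, simp, rule abs_fn_le)
  then have bdd: "bdd_above ((\<lambda>r. Linf_norm (fn M (Y r))) ` {s..t})"
    using K by (intro bdd_aboveI2) (rule order_trans)
  show ?thesis
    using abs_fn_le_Linf_norm[OF assms(3)] cSUP_upper[OF assms(2) bdd] by (rule order_trans)
qed

lemma fn_sq_le_sob_sq:
  assumes "\<xi> \<in> {0..1}" "\<mu> > 0"
  shows "(fn M d \<xi>)^2 \<le> \<mu> * sob_sq M 0 d + sob_sq M 2 d / \<mu>"
proof -
  define g where "g x = \<mu> * (fn M d x)^2 + (dfn M d x)^2 / \<mu>" for x
  have g_int: "(g has_integral \<mu> * sob_sq M 0 d + sob_sq M 2 d / \<mu>) {0..1}"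
    unfolding g_def by (intro has_integral_add has_integral_mult_right has_integral_divide
        has_integral_fn_sq has_integral_dfn_sq)
  have g_cont: "continuous_on {0..1} g"
    unfolding g_def by (intro continuous_intros continuous_on_fn continuous_on_dfn) (use assms(2) in auto)
  have sub: "{0..\<xi>} \<subseteq> {0..1}"
    using assms(1) by auto
  have "((\<lambda>x. 2 * (fn M d x * dfn M d x)) has_integral (fn M d \<xi>)^2 - (fn M d 0)^2) {0..\<xi>}"
  proof (rule fundamental_theorem_of_calculus)
    fix x :: real
    show "((\<lambda>x. (fn M d x)^2) has_vector_derivative 2 * (fn M d x * dfn M d x)) (at x within {0..\<xi>})"
      unfolding has_real_derivative_iff_has_vector_derivative[symmetric]
      by (rule DERIV_cong[OF DERIV_power[OF fn_has_real_derivative]]) simp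
  qed (use assms(1) in simp)
  then have "((\<lambda>x. 2 * (fn M d x * dfn M d x)) has_integral (fn M d \<xi>)^2) {0..\<xi>}"
    by (simp add: fn_at_0)
  moreover have "(g has_integral integral {0..\<xi>} g) {0..\<xi>}"
    using continuous_on_subset[OF g_cont sub] by (intro integrable_integral integrable_continuous_interval)
  ultimately have "(fn M d \<xi>)^2 \<le> integral {0..\<xi>} g"
    unfolding g_def by (rule has_integral_le) (rule two_mult_le_weighted_sq[OF assms(2)])
  also have "\<dots> \<le> integral {0..1} g"
    using g_cont continuous_on_subset[OF g_cont sub] assms(2)
    by (intro integral_subset_le[OF sub] integrable_continuous_interval) (auto simp: g_def)
  also have "\<dots> = \<mu> * sob_sq M 0 d + sob_sq M 2 d / \<mu>"
    using g_int by (rule integral_unique)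
  finally show ?thesis .
qed

section \<open>The nonlinear term\<close>

lemma BM_pairing:
  "(\<Sum>j=1..M. w j * BM M c d j) = - integral {0..1} (\<lambda>\<xi>. fn M c \<xi> * fn M d \<xi> * dfn M w \<xi>)"
proof -
  define g where "g \<xi> = fn M c \<xi> * dfn M d \<xi> + fn M d \<xi> * dfn M c \<xi>" for \<xi>
  have g_cont: "continuous_on {0..1} g"
    unfolding g_def by (intro continuous_intros continuous_on_fn continuous_on_dfn)
  have "((\<lambda>\<xi>. \<Sum>j=1..M. w j * (g \<xi> * hb j \<xi>)) has_integral
          (\<Sum>j=1..M. w j * integral {0..1} (\<lambda>\<xi>. g \<xi> * hb j \<xi>))) {0..1}"
    unfolding hb_def
    by (intro has_integral_sum finite_atLeastAtMost has_integral_mult_right integrable_integral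
        integrable_continuous_interval continuous_intros g_cont)
  moreover have "(\<Sum>j=1..M. w j * (g \<xi> * hb j \<xi>)) = g \<xi> * fn M w \<xi>" for \<xi>
    unfolding fn_def sum_distrib_left by (rule sum.cong) (simp_all add: mult_ac)
  moreover have "BM M c d j = integral {0..1} (\<lambda>\<xi>. g \<xi> * hb j \<xi>)" if "j \<in> {1..M}" for j
    using that unfolding BM_def g_def deriv_fn by simp
  ultimately have pairing: "((\<lambda>\<xi>. g \<xi> * fn M w \<xi>) has_integral (\<Sum>j=1..M. w j * BM M c d j)) {0..1}"
    by simp
  have "((\<lambda>\<xi>. g \<xi> * fn M w \<xi> + fn M c \<xi> * fn M d \<xi> * dfn M w \<xi>) has_integral 0) {0..1}"
  proof (rule has_integral_derivative_vanishing_at_ends)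
    fix x
    show "((\<lambda>x. fn M c x * fn M d x * fn M w x) has_real_derivative
           g x * fn M w x + fn M c x * fn M d x * dfn M w x) (at x within {0..1})"
      unfolding g_def
      by (rule DERIV_cong[OF DERIV_mult[OF DERIV_mult[OF fn_has_real_derivative fn_has_real_derivative]
            fn_has_real_derivative]]) (simp add: algebra_simps)
  qed (simp_all add: fn_at_0 fn_at_1)
  from has_integral_diff[OF this pairing] have
    "((\<lambda>\<xi>. fn M c \<xi> * fn M d \<xi> * dfn M w \<xi>) has_integral - (\<Sum>j=1..M. w j * BM M c d j)) {0..1}"
    by simp
  then show ?thesis
    by (simp add: integral_unique)
qed

lemma BM_pairing_self:
  "(\<Sum>j=1..M. d j * BM M c d j) = integral {0..1} (\<lambda>\<xi>. dfn M c \<xi> * (fn M d \<xi>)^2) / 2"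
proof -
  define f where "f \<xi> = fn M c \<xi> * fn M d \<xi> * dfn M d \<xi>" for \<xi>
  have f_int: "(f has_integral integral {0..1} f) {0..1}"
    unfolding f_def
    by (intro integrable_integral integrable_continuous_interval continuous_intros continuous_on_fn continuous_on_dfn)
  have "((\<lambda>\<xi>. dfn M c \<xi> * (fn M d \<xi>)^2 + 2 * f \<xi>) has_integral 0) {0..1}"
  proof (rule has_integral_derivative_vanishing_at_ends)
    fix x
    show "((\<lambda>x. fn M c x * (fn M d x)^2) has_real_derivative dfn M c x * (fn M d x)^2 + 2 * f x)
          (at x within {0..1})"
      unfolding f_def
      by (rule DERIV_cong[OF DERIV_mult[OF fn_has_real_derivative DERIV_power[OF fn_has_real_derivative]]])
         (simp add: algebra_simps power2_eq_square)
  qed (simp_all add: fn_at_0 fn_at_1)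
  from has_integral_diff[OF this has_integral_mult_right[OF f_int, of 2]] have
    "((\<lambda>\<xi>. dfn M c \<xi> * (fn M d \<xi>)^2) has_integral - 2 * integral {0..1} f) {0..1}"
    by simp
  then show ?thesis
    unfolding BM_pairing f_def[symmetric] by (simp add: integral_unique)
qed

lemma BM_pairing_abs_le:
  assumes "\<mu> > 0" and y_bound: "\<And>\<xi>. \<xi> \<in> {0..1} \<Longrightarrow> \<bar>fn M y \<xi>\<bar> \<le> S"
  shows "\<bar>\<Sum>j=1..M. w j * BM M y d j\<bar> \<le> S / 2 * (\<mu> * sob_sq M 0 d + sob_sq M 2 w / \<mu>)"
proof -
  have "norm (integral {0..1} (\<lambda>\<xi>. fn M y \<xi> * fn M d \<xi> * dfn M w \<xi>))
        \<le> integral {0..1} (\<lambda>\<xi>. S / 2 * (\<mu> * (fn M d \<xi>)^2 + (dfn M w \<xi>)^2 / \<mu>))"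
  proof (rule Henstock_Kurzweil_Integration.integral_norm_bound_integral)
    fix x :: real
    assume x: "x \<in> {0..1}"
    have "\<bar>fn M y x * fn M d x * dfn M w x\<bar> \<le> S * (\<bar>fn M d x\<bar> * \<bar>dfn M w x\<bar>)"
      using y_bound[OF x] by (simp add: abs_mult mult.assoc mult_right_mono)
    also have "\<dots> \<le> S / 2 * (\<mu> * (fn M d x)^2 + (dfn M w x)^2 / \<mu>)"
      using mult_left_mono[OF two_mult_le_weighted_sq[OF assms(1), of "\<bar>fn M d x\<bar>" "\<bar>dfn M w x\<bar>"]
          order_trans[OF abs_ge_zero y_bound[OF x]]]
      by simp
    finally show "norm (fn M y x * fn M d x * dfn M w x) \<le> S / 2 * (\<mu> * (fn M d x)^2 + (dfn M w x)^2 / \<mu>)"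
      by simp
  qed (intro integrable_continuous_interval continuous_intros continuous_on_fn continuous_on_dfn; use assms(1) in simp)+
  also have "\<dots> = S / 2 * (\<mu> * sob_sq M 0 d + sob_sq M 2 w / \<mu>)"
    by (intro integral_unique has_integral_mult_right has_integral_add has_integral_divide
        has_integral_fn_sq has_integral_dfn_sq)
  finally show ?thesis
    unfolding BM_pairing by simp
qed

lemma BM_pairing_negative_sobolev_le:
  assumes "0 \<le> \<theta>" "\<theta> \<le> 1" "S > 0" and y_bound: "\<And>\<xi>. \<xi> \<in> {0..1} \<Longrightarrow> \<bar>fn M y \<xi>\<bar> \<le> S"
  shows "4 * \<bar>\<Sum>j=1..M. ((real j * pi) powr (-2*\<theta>) * d j) * BM M y d j\<bar>
         \<le> sob_sq M (2 - 2*\<theta>) d + 16 * S^2 * sob_sq M (-2*\<theta>) d"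
proof -
  define u where "u = 4 * S"
  define \<mu> where "\<mu> = u powr (1 - 2*\<theta>)"
  have u: "u > 0" and \<mu>: "\<mu> > 0"
    using assms(3) by (simp_all add: u_def \<mu>_def)
  have u_mult_\<mu>: "u * \<mu> = u powr (2 - 2*\<theta>)"
    using u by (simp add: \<mu>_def powr_mult_base)
  have u_div_\<mu>: "u / \<mu> = u powr (2*\<theta>)"
    using u powr_diff[of u 1 "1 - 2*\<theta>"] by (simp add: \<mu>_def)
  have "4 * \<bar>\<Sum>j=1..M. ((real j * pi) powr (-2*\<theta>) * d j) * BM M y d j\<bar>
        \<le> u / 2 * (\<mu> * sob_sq M 0 d + sob_sq M (2 - 4*\<theta>) d / \<mu>)"
    using BM_pairing_abs_le[OF \<mu> y_bound, of "\<lambda>k. (real k * pi) powr (-2*\<theta>) * d k" d]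
      sob_sq_rescale[where p=2 and q="-2*\<theta>" and d=d and M=M]
    by (simp add: u_def)
  also have "\<dots> = (\<Sum>k=1..M. (u powr (2 - 2*\<theta>) + u powr (2*\<theta>) * (real k * pi) powr (2 - 4*\<theta>)) * (d k)^2) / 2"
    unfolding sob_sq_0 sob_sq_def[of M "2 - 4*\<theta>"] u_mult_\<mu>[symmetric] u_div_\<mu>[symmetric]
    by (simp add: sum_distrib_left sum_divide_distrib sum.distrib field_simps)
  also have "\<dots> \<le> (\<Sum>k=1..M. ((real k * pi) powr (2 - 2*\<theta>) + u^2 * (real k * pi) powr (-2*\<theta>)) * (d k)^2)"
  proof (unfold sum_divide_distrib, intro sum_mono)
    fix k
    assume "k \<in> {1..M}"
    then have "0 < real k * pi"
      by auto
    from mult_right_mono[OF young_weight_le[OF u this assms(1,2)] zero_le_power2[of "d k"]]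
    show "(u powr (2 - 2*\<theta>) + u powr (2*\<theta>) * (real k * pi) powr (2 - 4*\<theta>)) * (d k)^2 / 2
          \<le> ((real k * pi) powr (2 - 2*\<theta>) + u^2 * (real k * pi) powr (-2*\<theta>)) * (d k)^2"
      by (simp add: algebra_simps)
  qed
  also have "\<dots> = sob_sq M (2 - 2*\<theta>) d + 16 * S^2 * sob_sq M (-2*\<theta>) d"
    by (simp add: sob_sq_def u_def sum_distrib_left sum.distrib algebra_simps power_mult_distrib)
  finally show ?thesis .
qed

lemma integral_dfn_mult_fn_sq_le:
  assumes "\<epsilon> > 0"
  shows "integral {0..1} (\<lambda>\<xi>. dfn M y \<xi> * (fn M d \<xi>)^2)
         \<le> \<epsilon> * sob_sq M 2 y * sob_sq M 0 d + sob_sq M 2 d + sob_sq M 0 d / (16 * \<epsilon>^2)"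
proof (cases "sob_sq M 0 d = 0")
  case True
  then have "\<forall>k\<in>{1..M}. (d k)^2 = 0"
    unfolding sob_sq_0 by (subst sum_nonneg_eq_0_iff[symmetric]) auto
  then have "fn M d = (\<lambda>_. 0)"
    unfolding fn_def by (intro ext sum.neutral) simp
  then show ?thesis
    using True assms sob_sq_nonneg[of M 2 d] sob_sq_nonneg[of M 2 y] by simp
next
  case False
  define m where "m = sob_sq M 0 d"
  define B where "B = m / (4 * \<epsilon>) + 4 * \<epsilon> * sob_sq M 2 d"
  define \<nu> where "\<nu> = 2 * \<epsilon> * m"
  have m: "m > 0"
    using False sob_sq_nonneg[of M 0 d] unfolding m_def by linarith
  then have \<nu>: "\<nu> > 0"
    using assms by (simp add: \<nu>_def)
  have "integral {0..1} (\<lambda>\<xi>. dfn M y \<xi> * (fn M d \<xi>)^2) \<le> (\<nu> * sob_sq M 2 y + B * m / \<nu>) / 2"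
  proof (rule has_integral_le)
    show "((\<lambda>\<xi>. dfn M y \<xi> * (fn M d \<xi>)^2) has_integral
           integral {0..1} (\<lambda>\<xi>. dfn M y \<xi> * (fn M d \<xi>)^2)) {0..1}"
      by (intro integrable_integral integrable_continuous_interval continuous_intros continuous_on_fn continuous_on_dfn)
    show "((\<lambda>\<xi>. (\<nu> * (dfn M y \<xi>)^2 + B * (fn M d \<xi>)^2 / \<nu>) / 2) has_integral
           (\<nu> * sob_sq M 2 y + B * m / \<nu>) / 2) {0..1}"
      unfolding m_def
      by (intro has_integral_divide has_integral_add has_integral_mult_right has_integral_fn_sq has_integral_dfn_sq)
  next
    fix x :: real
    assume "x \<in> {0..1}"
    then have "(fn M d x)^2 \<le> B"
      unfolding B_def m_def using fn_sq_le_sob_sq[of x "1 / (4 * \<epsilon>)"] assms by (simp add: mult.commute)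
    then have "((fn M d x)^2)^2 / \<nu> \<le> B * (fn M d x)^2 / \<nu>"
      using \<nu> by (intro divide_right_mono) (simp_all add: power2_eq_square mult_right_mono)
    then have "2 * (dfn M y x * (fn M d x)^2) \<le> \<nu> * (dfn M y x)^2 + B * (fn M d x)^2 / \<nu>"
      using two_mult_le_weighted_sq[OF \<nu>, of "dfn M y x" "(fn M d x)^2"] by (smt (verit) add_left_mono)
    then show "dfn M y x * (fn M d x)^2 \<le> (\<nu> * (dfn M y x)^2 + B * (fn M d x)^2 / \<nu>) / 2"
      by simp
  qed
  also have "\<dots> = \<epsilon> * sob_sq M 2 y * m + sob_sq M 2 d + m / (16 * \<epsilon>^2)"
    using m assms unfolding B_def \<nu>_def by (simp add: field_simps power2_eq_square)
  finally show ?thesis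
    unfolding m_def .
qed

lemma BM_pairing_self_le:
  assumes "\<epsilon> > 0"
  shows "4 * (\<Sum>j=1..M. d j * BM M y d j)
         \<le> 2 * sob_sq M 2 d + (2 * \<epsilon> * sob_sq M 2 y + 1 / (8 * \<epsilon>^2)) * sob_sq M 0 d"
  using integral_dfn_mult_fn_sq_le[OF assms, of M y d] unfolding BM_pairing_self
  by (simp add: field_simps power2_eq_square)

section \<open>Energy estimates for the linearised equation\<close>

definition sob_sq_rate :: "nat \<Rightarrow> real \<Rightarrow> (nat \<Rightarrow> real) \<Rightarrow> (nat \<Rightarrow> real) \<Rightarrow> real" where
  "sob_sq_rate M p y d = -2 * sob_sq M (p + 2) d + 4 * (\<Sum>j=1..M. ((real j * pi) powr p * d j) * BM M y d j)"

lemma sob_sq_eta_has_derivative: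
  assumes eta: "is_eta M Y s h \<eta>" and "u \<ge> s"
  shows "((\<lambda>u. sob_sq M p (\<eta> u)) has_real_derivative sob_sq_rate M p (Y u) (\<eta> u)) (at u within {s..})"
proof -
  define \<eta>' where "\<eta>' k = - (pi * real k)\<^sup>2 * \<eta> u k + 2 * BM M (Y u) (\<eta> u) k" for k
  have "((\<lambda>u. sob_sq M p (\<eta> u)) has_real_derivative
         (\<Sum>k=1..M. (real k * pi) powr p * (2 * \<eta> u k * \<eta>' k))) (at u within {s..})"
    using eta assms(2) unfolding is_eta_def sob_sq_def \<eta>'_def
    by (intro DERIV_sum DERIV_cmult DERIV_cong[OF DERIV_power]) auto
  moreover have "(\<Sum>k=1..M. (real k * pi) powr p * (2 * \<eta> u k * \<eta>' k)) = sob_sq_rate M p (Y u) (\<eta> u)"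
    unfolding sob_sq_rate_def sob_sq_def sum_distrib_left sum.distrib[symmetric]
  proof (rule sum.cong[OF refl])
    fix k :: nat
    assume "k \<in> {1..M}"
    then have "(real k * pi) powr (p + 2) = (real k * pi) powr p * (pi * real k)\<^sup>2"
      by (simp add: powr_add powr_numeral mult.commute)
    then show "(real k * pi) powr p * (2 * \<eta> u k * \<eta>' k)
      = -2 * ((real k * pi) powr (p + 2) * (\<eta> u k)^2) + 4 * (((real k * pi) powr p * \<eta> u k) * BM M (Y u) (\<eta> u) k)"
      by (simp add: \<eta>'_def algebra_simps power2_eq_square)
  qed
  ultimately show ?thesis
    by simp
qed

lemma sob_sq_eta_has_derivative_within:
  assumes "is_eta M Y s h \<eta>" "s \<le> a" "u \<in> {a..b}"
  shows "((\<lambda>u. sob_sq M p (\<eta> u)) has_real_derivative sob_sq_rate M p (Y u) (\<eta> u)) (at u within {a..b})"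
  using assms by (intro DERIV_subset[OF sob_sq_eta_has_derivative]) auto

lemma continuous_on_sob_sq_eta:
  assumes "is_eta M Y s h \<eta>" "s \<le> a"
  shows "continuous_on {a..b} (\<lambda>u. sob_sq M p (\<eta> u))"
  unfolding continuous_on_eq_continuous_within
  using sob_sq_eta_has_derivative_within[OF assms] DERIV_continuous by blast

lemma sob_sq_rate_negative_le:
  assumes "0 \<le> \<theta>" "\<theta> \<le> 1" "S > 0" "\<And>\<xi>. \<xi> \<in> {0..1} \<Longrightarrow> \<bar>fn M y \<xi>\<bar> \<le> S"
  shows "sob_sq_rate M (-2*\<theta>) y d \<le> - sob_sq M (2 - 2*\<theta>) d + 16 * S^2 * sob_sq M (-2*\<theta>) d"
  using BM_pairing_negative_sobolev_le[OF assms, of d] unfolding sob_sq_rate_def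
  by (simp add: abs_le_iff)

lemma sob_sq_rate_L2_le:
  assumes "\<epsilon> > 0"
  shows "sob_sq_rate M 0 y d \<le> (2 * \<epsilon> * sob_sq M 2 y + 1 / (8 * \<epsilon>^2)) * sob_sq M 0 d"
  using BM_pairing_self_le[OF assms, where M=M and d=d and y=y] unfolding sob_sq_rate_def by simp

definition short_time_const :: real where
  "short_time_const = exp 16 * (1 + 17 * exp 16)"

lemma short_time_const_pos: "short_time_const > 0"
  by (simp add: short_time_const_def add_pos_pos)

lemma sob_sq_eta_short_time:
  assumes eta: "is_eta M Y s h \<eta>" and \<theta>: "0 \<le> \<theta>" "\<theta> \<le> 1" and "S > 0"
    and bound: "\<And>u \<xi>. u \<in> {s..t} \<Longrightarrow> \<xi> \<in> {0..1} \<Longrightarrow> \<bar>fn M (Y u) \<xi>\<bar> \<le> S"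
    and "s < t" and short: "(t - s) * S^2 \<le> 1"
  shows "sob_sq M 0 (\<eta> t) \<le> short_time_const * (t - s) powr (-\<theta>) * sob_sq M (-2*\<theta>) h"
proof -
  define \<tau> where "\<tau> = t - s"
  define c where "c = 16 * S^2"
  have \<tau>: "\<tau> > 0" and c: "c \<ge> 0" and c\<tau>: "c * \<tau> \<le> 16"
    using assms(6) short by (simp_all add: \<tau>_def c_def mult.commute)
  let ?G = "\<lambda>u. sob_sq M (-2*\<theta>) (\<eta> u)" and ?D = "\<lambda>u. sob_sq M (2 - 2*\<theta>) (\<eta> u)"
    and ?m = "\<lambda>u. sob_sq M 0 (\<eta> u)"
  have rate_G: "sob_sq_rate M (-2*\<theta>) (Y u) (\<eta> u) \<le> - ?D u + c * ?G u" if "u \<in> {s..t}" for u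
    unfolding c_def by (rule sob_sq_rate_negative_le[OF \<theta> \<open>S > 0\<close> bound[OF that]])
  have rate_m: "sob_sq_rate M 0 (Y u) (\<eta> u) \<le> c * ?m u" if "u \<in> {s..t}" for u
    using sob_sq_rate_negative_le[OF order_refl zero_le_one \<open>S > 0\<close> bound[OF that], of "\<eta> u"]
      sob_sq_nonneg[of M 2 "\<eta> u"]
    by (simp add: c_def)
  have growth: "sob_sq M p (\<eta> b) \<le> exp 16 * sob_sq M p (\<eta> a)"
    if "s \<le> a" "a \<le> b" "b \<le> t" "\<And>u. u \<in> {a..b} \<Longrightarrow> sob_sq_rate M p (Y u) (\<eta> u) \<le> c * sob_sq M p (\<eta> u)"
    for p a b
  proof -
    have "sob_sq M p (\<eta> b) \<le> sob_sq M p (\<eta> a) * exp (c * (b - a))"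
      by (rule gronwall_const_rate[OF _ sob_sq_eta_has_derivative_within[OF eta]]) (use that in auto)
    also have "\<dots> \<le> sob_sq M p (\<eta> a) * exp 16"
      using that c c\<tau> mult_left_mono[of "b - a" \<tau> c] sob_sq_nonneg
      by (intro mult_left_mono) (auto simp: \<tau>_def)
    finally show ?thesis
      by (simp add: mult.commute)
  qed
  have G_le: "?G u \<le> exp 16 * ?G s" if "u \<in> {s..t}" for u
  proof (rule growth)
    fix v
    assume "v \<in> {s..u}"
    then have "v \<in> {s..t}"
      using that by auto
    from rate_G[OF this] sob_sq_nonneg[of M "2 - 2*\<theta>" "\<eta> v"]
    show "sob_sq_rate M (-2*\<theta>) (Y v) (\<eta> v) \<le> c * ?G v"
      by linarith
  qed (use that in auto)
  have m_le: "?m t \<le> exp 16 * ?m u" if "u \<in> {s..t}" for u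
    using that rate_m by (intro growth) auto
  define IG where "IG = integral {s..t} ?G"
  define ID where "ID = integral {s..t} ?D"
  have IG: "(?G has_integral IG) {s..t}" and ID: "(?D has_integral ID) {s..t}"
    unfolding IG_def ID_def
    by (intro integrable_integral integrable_continuous_interval continuous_on_sob_sq_eta[OF eta order_refl])+
  have IG_le: "IG \<le> \<tau> * (exp 16 * ?G s)"
    using has_integral_le[OF IG has_integral_const_real[of "exp 16 * ?G s" s t]] G_le assms(6)
    by (simp add: \<tau>_def mult.commute)
  have "c * IG \<le> (c * \<tau>) * (exp 16 * ?G s)"
    using mult_left_mono[OF IG_le c] by (simp add: mult.assoc)
  also have "\<dots> \<le> 16 * (exp 16 * ?G s)"
    using c\<tau> sob_sq_nonneg by (intro mult_right_mono) auto
  finally have "c * IG \<le> 16 * (exp 16 * ?G s)" .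
  moreover have "ID \<le> ?G s + c * IG"
    by (rule integral_dissipation_le[OF _ sob_sq_eta_has_derivative_within[OF eta order_refl] rate_G ID IG])
       (use assms(6) sob_sq_nonneg in auto)
  ultimately have ID_le: "ID \<le> (1 + 16 * exp 16) * ?G s"
    by (simp add: algebra_simps)
  have "?m t * \<tau> \<le> exp 16 * (\<tau> powr (-\<theta>) * IG + \<tau> powr (1 - \<theta>) * ID)"
  proof (rule has_integral_le[OF _ has_integral_mult_right[OF has_integral_add[OF
        has_integral_mult_right[OF IG] has_integral_mult_right[OF ID]]]])
    show "((\<lambda>u. ?m t) has_integral ?m t * \<tau>) {s..t}"
      using has_integral_const_real[of "?m t" s t] assms(6) by (simp add: \<tau>_def mult.commute)
    fix u
    assume "u \<in> {s..t}"
    then show "?m t \<le> exp 16 * (\<tau> powr (-\<theta>) * ?G u + \<tau> powr (1 - \<theta>) * ?D u)"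
      using sob_sq_0_le_interpolation[OF \<tau> \<theta>, where M=M and c="\<eta> u"]
      by (intro order_trans[OF m_le mult_left_mono]) auto
  qed
  also have "\<dots> \<le> exp 16 * (\<tau> powr (-\<theta>) * (\<tau> * (exp 16 * ?G s)) + \<tau> powr (1 - \<theta>) * ((1 + 16 * exp 16) * ?G s))"
    using IG_le ID_le by (intro mult_left_mono add_mono) auto
  also have "\<dots> = short_time_const * \<tau> powr (-\<theta>) * ?G s * \<tau>"
    using \<tau> by (simp add: short_time_const_def powr_diff powr_minus field_simps)
  finally show ?thesis
    using \<tau> by (simp add: \<tau>_def eta[unfolded is_eta_def])
qed

lemma sob_sq_eta_long_time:
  assumes eta: "is_eta M Y s h \<eta>" and "\<epsilon> > 0" "s \<le> r" "r \<le> t"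
    and "continuous_on {r..t} (\<lambda>u. sob_sq M 2 (Y u))"
  shows "sob_sq M 0 (\<eta> t)
         \<le> sob_sq M 0 (\<eta> r) * exp (integral {r..t} (\<lambda>u. 2 * \<epsilon> * sob_sq M 2 (Y u) + 1 / (8 * \<epsilon>^2)))"
  by (rule gronwall_differential[OF _ sob_sq_eta_has_derivative_within[OF eta] sob_sq_rate_L2_le])
     (use assms in \<open>auto intro!: continuous_intros\<close>)

lemma sob_sq_eta_smoothing:
  assumes eta: "is_eta M Y s h \<eta>" and \<theta>: "0 \<le> \<theta>" "\<theta> \<le> 1" and \<epsilon>: "\<epsilon> > 0" and S: "S \<ge> 1"
    and bound: "\<And>u \<xi>. u \<in> {s..t} \<Longrightarrow> \<xi> \<in> {0..1} \<Longrightarrow> \<bar>fn M (Y u) \<xi>\<bar> \<le> S"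
    and "s < t" and P_cont: "continuous_on {s..t} (\<lambda>u. sob_sq M 2 (Y u))"
  shows "sob_sq M 0 (\<eta> t) \<le> short_time_const * ((t - s) powr (-\<theta>) + S^2)
           * exp (2 * \<epsilon> * integral {s..t} (\<lambda>u. sob_sq M 2 (Y u)) + (t - s) / (8 * \<epsilon>^2))
           * sob_sq M (-2*\<theta>) h"
proof -
  let ?K = "short_time_const" and ?Gh = "sob_sq M (-2*\<theta>) h" and ?P = "\<lambda>u. sob_sq M 2 (Y u)"
  define E where "E = exp (2 * \<epsilon> * integral {s..t} ?P + (t - s) / (8 * \<epsilon>^2))"
  have K: "?K > 0"
    by (rule short_time_const_pos)
  have "integral {s..t} ?P \<ge> 0"
    using P_cont sob_sq_nonneg by (intro integral_nonneg integrable_continuous_interval) auto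
  then have E: "E \<ge> 1"
    using \<epsilon> \<open>s < t\<close> unfolding E_def by simp
  have "(t - s) powr (-\<theta>) \<le> ((t - s) powr (-\<theta>) + S^2) * 1"
    by simp
  also have "\<dots> \<le> ((t - s) powr (-\<theta>) + S^2) * E"
    using E by (intro mult_left_mono) auto
  finally have weight: "(t - s) powr (-\<theta>) \<le> ((t - s) powr (-\<theta>) + S^2) * E" .
  show ?thesis
  proof (cases "(t - s) * S^2 \<le> 1")
    case True
    have "sob_sq M 0 (\<eta> t) \<le> ?K * (t - s) powr (-\<theta>) * ?Gh"
      using sob_sq_eta_short_time[OF eta \<theta> _ bound \<open>s < t\<close> True] S by simp
    also have "\<dots> \<le> ?K * ((t - s) powr (-\<theta>) + S^2) * E * ?Gh"
      using mult_left_mono[OF mult_right_mono[OF weight sob_sq_nonneg[of M "-2*\<theta>" h]] less_imp_le[OF K]]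
      by (simp add: mult_ac)
    finally show ?thesis
      unfolding E_def .
  next
    case False
    define r where "r = s + 1 / S^2"
    have r: "s < r" "r < t" "r - s = 1 / S^2"
      using False S by (auto simp: r_def field_simps)
    have P_cont_r: "continuous_on {r..t} ?P"
      using P_cont r by (auto elim: continuous_on_subset)
    have "sob_sq M 0 (\<eta> r) \<le> ?K * (r - s) powr (-\<theta>) * ?Gh"
      by (rule sob_sq_eta_short_time[OF eta \<theta> _ bound r(1)]) (use r S in \<open>auto simp: field_simps\<close>)
    also have "\<dots> \<le> ?K * S^2 * ?Gh"
    proof -
      have "(r - s) powr (-\<theta>) = (S^2) powr \<theta>"
        using S unfolding r(3) by (simp add: powr_minus_divide powr_divide)
      also have "\<dots> \<le> S^2"
        using S \<theta> powr_mono[of \<theta> 1 "S^2"] by (simp add: one_le_power)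
      finally show ?thesis
        using K sob_sq_nonneg[of M "-2*\<theta>" h] by (intro mult_right_mono mult_left_mono) auto
    qed
    finally have short_part: "sob_sq M 0 (\<eta> r) \<le> ?K * S^2 * ?Gh" .
    have "integral {r..t} ?P \<le> integral {s..t} ?P"
      using P_cont P_cont_r r sob_sq_nonneg by (intro integral_subset_le integrable_continuous_interval) auto
    moreover have "integral {r..t} (\<lambda>u. 2 * \<epsilon> * ?P u + 1 / (8 * \<epsilon>^2))
                   = 2 * \<epsilon> * integral {r..t} ?P + (t - r) / (8 * \<epsilon>^2)"
      using P_cont_r r by (subst integral_add) (auto intro!: integrable_continuous_interval continuous_intros)
    ultimately have "integral {r..t} (\<lambda>u. 2 * \<epsilon> * ?P u + 1 / (8 * \<epsilon>^2))
                     \<le> 2 * \<epsilon> * integral {s..t} ?P + (t - s) / (8 * \<epsilon>^2)"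
      using \<epsilon> r by (auto intro!: add_mono divide_right_mono)
    then have "sob_sq M 0 (\<eta> t) \<le> sob_sq M 0 (\<eta> r) * E"
      unfolding E_def using sob_sq_nonneg[of M 0 "\<eta> r"]
      by (intro order_trans[OF sob_sq_eta_long_time[OF eta \<epsilon> _ _ P_cont_r] mult_left_mono])
         (use r in auto)
    also have "\<dots> \<le> ?K * S^2 * ?Gh * E"
      using short_part E by (intro mult_right_mono) auto
    also have "\<dots> \<le> ?K * ((t - s) powr (-\<theta>) + S^2) * E * ?Gh"
      using mult_left_mono[OF mult_right_mono[of "S^2" "(t - s) powr (-\<theta>) + S^2" "E * ?Gh"] less_imp_le[OF K]]
        E sob_sq_nonneg[of M "-2*\<theta>" h]
      by (simp add: mult_ac)
    finally show ?thesis
      unfolding E_def .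
  qed
qed

lemma eta_L2_ratio_bound:
  fixes Y :: "real \<Rightarrow> nat \<Rightarrow> real"
  assumes \<alpha>: "0 \<le> \<alpha>" "\<alpha> < 1/2" and \<epsilon>: "\<epsilon> > 0"
    and Y_cont: "\<And>k. continuous_on {s..t} (\<lambda>r. Y r k)"
    and h: "in_HM M h" "h \<noteq> (\<lambda>_. 0)" and "s < t" "t - s \<le> T" and eta: "is_eta M Y s h \<eta>"
  shows "L2_norm (fn M (\<eta> t)) / L2_norm (fn M (negA_pow \<alpha> h))
         \<le> sqrt short_time_const * exp (T / (16 * \<epsilon>^2)) * (1 + T powr \<alpha>) / (t - s) powr \<alpha>
            * exp (\<epsilon> * integral {s..t} (\<lambda>r. L2_norm (deriv (fn M (Y r))) ^ 2))
            * ((SUP r\<in>{s..t}. Linf_norm (fn M (Y r))) + 1)"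
proof -
  define S where "S = (SUP r\<in>{s..t}. Linf_norm (fn M (Y r))) + 1"
  define \<tau> where "\<tau> = t - s"
  define IP where "IP = integral {s..t} (\<lambda>r. sob_sq M 2 (Y r))"
  let ?K = "short_time_const" and ?Gh = "sob_sq M (-4*\<alpha>) h"
  have \<tau>: "0 < \<tau>" "\<tau> \<le> T"
    using assms(7,8) by (simp_all add: \<tau>_def)
  have bound: "\<bar>fn M (Y u) \<xi>\<bar> \<le> S" if "u \<in> {s..t}" "\<xi> \<in> {0..1}" for u \<xi>
    using abs_fn_le_SUP_Linf_norm[where Y=Y and M=M, OF Y_cont that] unfolding S_def by linarith
  have S: "S \<ge> 1"
    using abs_fn_le_SUP_Linf_norm[where Y=Y and u=s and \<xi>=0 and M=M, OF Y_cont] assms(7) by (simp add: S_def)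
  have P_cont: "continuous_on {s..t} (\<lambda>u. sob_sq M 2 (Y u))"
    unfolding sob_sq_def by (intro continuous_intros Y_cont)
  have K: "?K > 0"
    by (rule short_time_const_pos)
  have "sob_sq M 0 (\<eta> t) \<le> ?K * (\<tau> powr (-2*\<alpha>) + S^2) * exp (2 * \<epsilon> * IP + \<tau> / (8 * \<epsilon>^2)) * ?Gh"
    using sob_sq_eta_smoothing[OF eta _ _ \<epsilon> S bound assms(7) P_cont, of "2*\<alpha>"] \<alpha>
    by (simp add: \<tau>_def IP_def)
  also have "\<dots> = (sqrt ?K * sqrt (\<tau> powr (-2*\<alpha>) + S^2) * exp (\<epsilon> * IP + \<tau> / (16 * \<epsilon>^2)))^2 * ?Gh"
  proof -
    have "exp (2 * \<epsilon> * IP + \<tau> / (8 * \<epsilon>^2)) = (exp (\<epsilon> * IP + \<tau> / (16 * \<epsilon>^2)))^2"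
      unfolding exp_double[symmetric] by (simp add: field_simps)
    then show ?thesis
      using K by (simp add: power_mult_distrib)
  qed
  finally have "sqrt (sob_sq M 0 (\<eta> t)) / sqrt ?Gh
                \<le> sqrt ?K * sqrt (\<tau> powr (-2*\<alpha>) + S^2) * exp (\<epsilon> * IP + \<tau> / (16 * \<epsilon>^2))"
    using sob_sq_pos[OF h] K by (intro sqrt_divide_sqrt_le sob_sq_nonneg mult_nonneg_nonneg) auto
  also have "\<dots> = sqrt ?K * sqrt (\<tau> powr (-2*\<alpha>) + S^2) * (exp (\<epsilon> * IP) * exp (\<tau> / (16 * \<epsilon>^2)))"
    by (simp add: exp_add)
  also have "\<dots> \<le> sqrt ?K * ((1 + T powr \<alpha>) / \<tau> powr \<alpha> * S) * (exp (\<epsilon> * IP) * exp (T / (16 * \<epsilon>^2)))"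
    using sqrt_powr_neg_add_sq_le[OF \<tau> \<alpha>(1) S] \<tau> S K
    by (intro mult_mono mult_left_mono) (auto intro!: divide_right_mono)
  finally show ?thesis
    unfolding L2_norm_fn_negA_pow by (simp add: L2_norm_fn L2_norm_deriv_fn_sq S_def \<tau>_def IP_def mult_ac)
qed

theorem lemma4p2:
  fixes T \<alpha> \<epsilon> :: real
    and P :: "'a measure"
    and q :: "nat \<Rightarrow> real" and e :: "nat \<Rightarrow> real \<Rightarrow> real"
    and W :: "nat \<Rightarrow> real \<Rightarrow> 'a \<Rightarrow> real"
  assumes "0 < T"
    and "0 \<le> \<alpha>" and "\<alpha> < 1/2" and "0 < \<epsilon>"
    and "L2_ONB e" and "\<forall>k. 0 \<le> q k" and "summable q"
    and "indep_BMs P W"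
  shows "\<exists>C>0. \<forall>M x X h s t.
           in_HM M x \<and> is_XM P M x q e W X \<and> in_HM M h \<and> h \<noteq> (\<lambda>_. 0)
           \<and> 0 \<le> s \<and> s < t \<and> t \<le> T \<longrightarrow>
           (AE \<omega> in P. \<forall>\<eta>. is_eta M (\<lambda>r. X r \<omega>) s h \<eta> \<longrightarrow>
              L2_norm (fn M (\<eta> t)) / L2_norm (fn M (negA_pow \<alpha> h))
              \<le> C / (t - s) powr \<alpha>
                 * exp (\<epsilon> * integral {s..t} (\<lambda>r. L2_norm (deriv (fn M (X r \<omega>))) ^ 2))
                 * ((SUP r\<in>{s..t}. Linf_norm (fn M (X r \<omega>))) + 1))"
proof (intro exI[of _ "sqrt short_time_const * exp (T / (16 * \<epsilon>^2)) * (1 + T powr \<alpha>)"] conjI allI impI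
    AE_I2, goal_cases)
  case 1
  show ?case
    using short_time_const_pos by (simp add: add_pos_nonneg)
next
  case (2 M x X h s t \<omega> \<eta>)
  then have "continuous_on {0..} (\<lambda>r. X r \<omega> k)" for k
    unfolding is_XM_def by blast
  then have "continuous_on {s..t} (\<lambda>r. X r \<omega> k)" for k
    by (rule continuous_on_subset) (use 2 in auto)
  with 2 show ?case
    by (intro eta_L2_ratio_bound[OF assms(2-4)]) auto
qed

end
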